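(* Let $H\in\mathbb{R}^{n\times n}$ and $M\in\mathbb{R}^{m\times m}$ be symmetric positive semidefinite, $A\in\mathbb{R}^{m\times n}$, $b\in\mathbb{R}^m$, $c,q,r\in\mathbb{R}^n$. Assume $(x,y,z)$ satisfies $Hx+c-A^Ty-z=0$ and $Ax+My-b=0$. Let $l$ be an index and $\mathcal{B},\mathcal{N}$ index sets such that $\mathcal{B}$, $\{l\}$, $\mathcal{N}$ are pairwise disjoint with union $\{1,\dots,n\}$, and $x_{\mathcal{N}}+q_{\mathcal{N}}=0$, $z_{\mathcal{B}}+r_{\mathcal{B}}=0$. If $(\Delta x,\Delta y,\Delta z)$ satisfies $H\Delta x-A^T\Delta y-\Delta z=0$, $A\Delta x+M\Delta y=0$, $\Delta x_{\mathcal{N}}=0$, $\Delta z_{\mathcal{B}}=0$, then for all $\alpha\in\mathbb{R}$ the functions \[ f_P(x,y)=\tfrac12x^THx+\tfrac12y^TMy+c^Tx+r^Tx,\qquad f_D(x,y,z)=-\tfrac12x^THx-\tfrac12y^TMy+b^Ty-q^Tz \] satisfy \[ f_P(x+\alpha\Delta x,y+\alpha\Delta y)=f_P(x,y)+\Delta x_l(z_l+r_l)\alpha+\tfrac12\Delta x_l\Delta z_l\alpha^2, \] \[ f_D(x+\alpha\Delta x,y+\alpha\Delta y,z+\alpha\Delta z)=f_D(x,y,z)-\Delta z_l(x_l+q_l)\alpha-\tfrac12\Delta x_l\Delta z_l\alpha^2. \]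
   Context: For an index set $S$ and a vector $w$, $w_S$ denotes the subvector of components of $w$ with indices in $S$. *)

theory Defs
  imports "HOL-Analysis.Analysis"
begin

definition sym_psd :: "real^'n^'n \<Rightarrow> bool" where
  "sym_psd H \<longleftrightarrow> transpose H = H \<and> (\<forall>v. 0 \<le> v \<bullet> (H *v v))"

definition f_P :: "real^'n^'n \<Rightarrow> real^'m^'m \<Rightarrow> real^'n \<Rightarrow> real^'n \<Rightarrow> real^'n \<Rightarrow> real^'m \<Rightarrow> real" where
  "f_P H M c r x y = (1/2) * (x \<bullet> (H *v x)) + (1/2) * (y \<bullet> (M *v y)) + c \<bullet> x + r \<bullet> x"

definition f_D :: "real^'n^'n \<Rightarrow> real^'m^'m \<Rightarrow> real^'m \<Rightarrow> real^'n \<Rightarrow> real^'n \<Rightarrow> real^'m \<Rightarrow> real^'n \<Rightarrow> real" where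
  "f_D H M b q x y z = - (1/2) * (x \<bullet> (H *v x)) - (1/2) * (y \<bullet> (M *v y)) + b \<bullet> y - q \<bullet> z"

end

theory Submission
  imports Defs
begin

text \<open>Along the direction \<open>(\<Delta>x, \<Delta>y, \<Delta>z)\<close> both objectives are quadratic in \<open>\<alpha>\<close>.
  The direction equations give \<open>\<Delta>x\<^sup>T H \<Delta>x + \<Delta>y\<^sup>T M \<Delta>y = \<Delta>x\<^sup>T \<Delta>z\<close> for the curvature, and
  the optimality equations for \<open>(x, y, z)\<close> turn the slopes into \<open>\<Delta>x\<^sup>T (z + r)\<close> and
  \<open>-(x + q)\<^sup>T \<Delta>z\<close>. Since \<open>\<Delta>x\<close> vanishes on \<open>\<N>\<close>, \<open>\<Delta>z\<close> and \<open>z + r\<close> on \<open>\<B>\<close> and \<open>x + q\<close>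
  on \<open>\<N>\<close>, each of these inner products reduces to its \<open>l\<close>-th term.\<close>

lemma inner_transpose_mult:
  fixes A :: "real^'n^'m"
  shows "u \<bullet> (transpose A *v v) = (A *v u) \<bullet> v"
  by (metis dot_lmul_matrix inner_commute transpose_matrix_vector)

lemma inner_symmetric_mult_commute:
  fixes H :: "real^'n^'n"
  assumes "transpose H = H"
  shows "u \<bullet> (H *v v) = v \<bullet> (H *v u)"
  by (metis assms inner_transpose_mult inner_commute)

lemma quadratic_form_add_scaleR:
  fixes H :: "real^'n^'n"
  assumes "transpose H = H"
  shows "(x + a *\<^sub>R d) \<bullet> (H *v (x + a *\<^sub>R d))
    = x \<bullet> (H *v x) + 2 * a * (d \<bullet> (H *v x)) + a\<^sup>2 * (d \<bullet> (H *v d))"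
  using inner_symmetric_mult_commute[OF assms, of x d]
  by (simp add: power2_eq_square algebra_simps)

lemma inner_eq_component_if_products_vanish:
  fixes u w :: "real^'n"
  assumes "\<And>i. i \<noteq> l \<Longrightarrow> u $ i * w $ i = 0"
  shows "u \<bullet> w = u $ l * w $ l"
proof -
  have "u \<bullet> w = u $ l * w $ l + (\<Sum>i\<in>UNIV - {l}. u $ i * w $ i)"
    by (simp add: inner_vec_def sum.remove)
  also have "(\<Sum>i\<in>UNIV - {l}. u $ i * w $ i) = 0"
    using assms by (intro sum.neutral) auto
  finally show ?thesis by simp
qed

lemma f_P_along_line:
  assumes "transpose H = H" and "transpose M = M"
  shows "f_P H M c r (x + a *\<^sub>R dx) (y + a *\<^sub>R dy) = f_P H M c r x y
    + a * (dx \<bullet> (H *v x) + dy \<bullet> (M *v y) + c \<bullet> dx + r \<bullet> dx)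
    + a\<^sup>2 / 2 * (dx \<bullet> (H *v dx) + dy \<bullet> (M *v dy))"
  unfolding f_P_def quadratic_form_add_scaleR[OF assms(1)] quadratic_form_add_scaleR[OF assms(2)]
  by (simp add: inner_commute algebra_simps)

lemma f_D_along_line:
  assumes "transpose H = H" and "transpose M = M"
  shows "f_D H M b q (x + a *\<^sub>R dx) (y + a *\<^sub>R dy) (z + a *\<^sub>R dz) = f_D H M b q x y z
    + a * (- (dx \<bullet> (H *v x)) - dy \<bullet> (M *v y) + b \<bullet> dy - q \<bullet> dz)
    - a\<^sup>2 / 2 * (dx \<bullet> (H *v dx) + dy \<bullet> (M *v dy))"
  unfolding f_D_def quadratic_form_add_scaleR[OF assms(1)] quadratic_form_add_scaleR[OF assms(2)]
  by (simp add: algebra_simps)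

lemma direction_curvature:
  fixes H :: "real^'n^'n" and M :: "real^'m^'m" and A :: "real^'n^'m"
  assumes "H *v dx - transpose A *v dy - dz = 0" and "A *v dx + M *v dy = 0"
  shows "dx \<bullet> (H *v dx) + dy \<bullet> (M *v dy) = dx \<bullet> dz"
proof -
  have "H *v dx = transpose A *v dy + dz" and "A *v dx = - (M *v dy)"
    using assms by (simp_all add: diff_diff_eq eq_neg_iff_add_eq_0)
  then have "dx \<bullet> (H *v dx) = - ((M *v dy) \<bullet> dy) + dx \<bullet> dz"
    by (simp add: inner_add_right inner_transpose_mult del: transpose_matrix_vector)
  then show ?thesis by (simp add: inner_commute)
qed

lemma primal_slope:
  fixes H :: "real^'n^'n" and M :: "real^'m^'m" and A :: "real^'n^'m"
  assumes "transpose M = M"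
    and "H *v x + c - transpose A *v y - z = 0" and "A *v dx + M *v dy = 0"
  shows "dx \<bullet> (H *v x) + dy \<bullet> (M *v y) + c \<bullet> dx + r \<bullet> dx = dx \<bullet> (z + r)"
proof -
  have "H *v x + c = transpose A *v y + z" and "A *v dx = - (M *v dy)"
    using assms(2,3) by (simp_all add: diff_diff_eq eq_neg_iff_add_eq_0)
  then have "dx \<bullet> (H *v x) + c \<bullet> dx = - ((M *v dy) \<bullet> y) + dx \<bullet> z"
    by (metis inner_add_right inner_commute inner_minus_left inner_transpose_mult)
  moreover have "(M *v dy) \<bullet> y = dy \<bullet> (M *v y)"
    using inner_symmetric_mult_commute[OF assms(1)] by (simp add: inner_commute)
  ultimately show ?thesis by (simp add: inner_add_right inner_commute)
qed

lemma dual_slope: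
  fixes H :: "real^'n^'n" and M :: "real^'m^'m" and A :: "real^'n^'m"
  assumes "transpose H = H" and "transpose M = M"
    and "A *v x + M *v y - b = 0" and "H *v dx - transpose A *v dy - dz = 0"
  shows "- (dx \<bullet> (H *v x)) - dy \<bullet> (M *v y) + b \<bullet> dy - q \<bullet> dz = - ((x + q) \<bullet> dz)"
proof -
  have "b = A *v x + M *v y" and "transpose A *v dy = H *v dx - dz"
    using assms(3,4) by (simp_all add: algebra_simps)
  then have "b \<bullet> dy = x \<bullet> (H *v dx - dz) + (M *v y) \<bullet> dy"
    by (metis inner_add_left inner_transpose_mult)
  then show ?thesis
    using inner_symmetric_mult_commute[OF assms(1), of x dx]
      inner_symmetric_mult_commute[OF assms(2), of y dy]
    by (simp add: inner_diff_right inner_add_left inner_add_right inner_commute)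
qed
theorem proposition11:
  fixes H :: "real^'n^'n" and M :: "real^'m^'m" and A :: "real^'n^'m"
    and b :: "real^'m" and c q r x z dx dz :: "real^'n" and y dy :: "real^'m"
    and l :: 'n and B N :: "'n set"
  assumes "sym_psd H" and "sym_psd M"
    and "H *v x + c - transpose A *v y - z = 0"
    and "A *v x + M *v y - b = 0"
    and "l \<notin> B" and "l \<notin> N" and "B \<inter> N = {}" and "B \<union> {l} \<union> N = UNIV"
    and "\<forall>i\<in>N. x $ i + q $ i = 0"
    and "\<forall>i\<in>B. z $ i + r $ i = 0"
    and "H *v dx - transpose A *v dy - dz = 0"
    and "A *v dx + M *v dy = 0"
    and "\<forall>i\<in>N. dx $ i = 0"
    and "\<forall>i\<in>B. dz $ i = 0"
  shows "\<forall>\<alpha>::real.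
      f_P H M c r (x + \<alpha> *\<^sub>R dx) (y + \<alpha> *\<^sub>R dy)
        = f_P H M c r x y + dx $ l * (z $ l + r $ l) * \<alpha> + (1/2) * dx $ l * dz $ l * \<alpha>^2
    \<and> f_D H M b q (x + \<alpha> *\<^sub>R dx) (y + \<alpha> *\<^sub>R dy) (z + \<alpha> *\<^sub>R dz)
        = f_D H M b q x y z - dz $ l * (x $ l + q $ l) * \<alpha> - (1/2) * dx $ l * dz $ l * \<alpha>^2"
proof (intro allI conjI)
  fix a :: real
  have sym: "transpose H = H" "transpose M = M"
    using assms(1,2) by (auto simp: sym_psd_def)
  have cover: "i \<in> B \<or> i \<in> N" if "i \<noteq> l" for i
    using assms(8) that by auto
  have curvature: "dx \<bullet> (H *v dx) + dy \<bullet> (M *v dy) = dx $ l * dz $ l"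
    unfolding direction_curvature[OF assms(11,12)]
    by (rule inner_eq_component_if_products_vanish) (use cover assms(13,14) in auto)
  have "dx \<bullet> (z + r) = dx $ l * (z $ l + r $ l)"
    by (subst inner_eq_component_if_products_vanish) (use cover assms(10,13) in auto)
  then show "f_P H M c r (x + a *\<^sub>R dx) (y + a *\<^sub>R dy)
      = f_P H M c r x y + dx $ l * (z $ l + r $ l) * a + (1/2) * dx $ l * dz $ l * a^2"
    unfolding f_P_along_line[OF sym] primal_slope[OF sym(2) assms(3,12)] curvature
    by (simp add: algebra_simps)
  have "(x + q) \<bullet> dz = (x $ l + q $ l) * dz $ l"
    by (subst inner_eq_component_if_products_vanish) (use cover assms(9,14) in auto)
  then show "f_D H M b q (x + a *\<^sub>R dx) (y + a *\<^sub>R dy) (z + a *\<^sub>R dz)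
      = f_D H M b q x y z - dz $ l * (x $ l + q $ l) * a - (1/2) * dx $ l * dz $ l * a^2"
    unfolding f_D_along_line[OF sym] dual_slope[OF sym assms(4,11)] curvature
    by (simp add: algebra_simps)
qed

end
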